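(* Let $m,n\ge2$, $W$ a channel from $\{1,\dots,m\}$ to $\{1,\dots,n\}$, and $\lambda\in\Lambda(W)$ with $C_{11}(\lambda)=\overline{C}_{11}(W)$. Then $P_\lambda(1)=\underline{P}_W(1)$. In particular, if $\underline{P}_W(1)>0$, then $\lambda_{\mathrm{U}_\ell}=\underline{P}_W(1)$ and $P_\lambda(2)=1-\underline{P}_W(1)$, where $\ell$ is an index maximizing $(\mathbf{1}W)_j$ over $1\le j\le n$.
   Context: A channel is a row-stochastic matrix; $\mathcal{D}$ is the set of deterministic (0-1) channels from $\{1,\dots,m\}$ to $\{1,\dots,n\}$, $\mathrm{rank}(D)$ the matrix rank, and $\mathrm{U}_j$ the deterministic channel with $j$-th column all ones. $\Lambda(W)=\{\lambda\text{ probability distribution on }\mathcal{D}: W=\sum_D\lambda_DD\}$, $C_{11}(\lambda)=\sum_D\lambda_D\log_2\mathrm{rank}(D)$, $\overline{C}_{11}(W)=\sup_{\lambda\in\Lambda(W)}C_{11}(\lambda)$. $P_\lambda(r)=\lambda(\{D:\mathrm{rank}(D)=r\})$, $\underline{P}_W(r)=\min_{\lambda\in\Lambda(W)}P_\lambda(r)$. $\mathbf{1}$ is the all-one row vector of length $m$. *)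

theory Defs
  imports "HOL-Analysis.Analysis"
begin

text \<open>Channels from the input alphabet 'm to the output alphabet 'n are
  matrices W :: real^'n^'m (rows indexed by inputs), W$i$j = probability of output j
  given input i.\<close>

definition channel :: "real^'n^'m \<Rightarrow> bool" where
  "channel W \<longleftrightarrow> (\<forall>i j. 0 \<le> W$i$j) \<and> (\<forall>i. (\<Sum>j\<in>UNIV. W$i$j) = 1)"

definition det_channels :: "(real^'n^'m) set" where
  "det_channels = {D. \<forall>i. \<exists>j. D$i = axis j 1}"

definition Uch :: "'n \<Rightarrow> real^'n^'m" where
  "Uch j = (\<chi> i. axis j 1)"

definition det_dist :: "(real^'n^'m \<Rightarrow> real) \<Rightarrow> bool" where
  "det_dist lam \<longleftrightarrow> (\<forall>D. 0 \<le> lam D) \<and> (\<forall>D. D \<notin> det_channels \<longrightarrow> lam D = 0)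
     \<and> (\<Sum>D\<in>det_channels. lam D) = 1"

definition Lambda :: "real^'n^'m \<Rightarrow> (real^'n^'m \<Rightarrow> real) set" where
  "Lambda W = {lam. det_dist lam \<and> W = (\<Sum>D\<in>det_channels. lam D *\<^sub>R D)}"

definition C11 :: "(real^'n^'m \<Rightarrow> real) \<Rightarrow> real" where
  "C11 lam = (\<Sum>D\<in>det_channels. lam D * log 2 (real (rank D)))"

definition C11bar :: "real^'n^'m \<Rightarrow> real" where
  "C11bar W = Sup (C11 ` Lambda W)"

definition Plam :: "(real^'n^'m \<Rightarrow> real) \<Rightarrow> nat \<Rightarrow> real" where
  "Plam lam r = (\<Sum>D\<in>{D\<in>det_channels. rank D = r}. lam D)"

definition Plow :: "real^'n^'m \<Rightarrow> nat \<Rightarrow> real" where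
  "Plow W r = Inf ((\<lambda>lam. Plam lam r) ` Lambda W)"

definition colsum :: "real^'n^'m \<Rightarrow> 'n \<Rightarrow> real" where
  "colsum W j = (\<Sum>i\<in>UNIV. W$i$j)"

end

theory Submission
  imports Defs
begin

text \<open>A deterministic channel is the matrix of a map h from inputs to outputs and has rank
  card (range h). Suppose an optimal lam charges some rank-one channel U_a and a channel D_h
  with h i \<noteq> a. Moving mass from U_a and D_h onto U_a with row i changed to h i (rank 2)
  and D_h with row i changed to a (rank r') preserves W and changes C11 by a multiple of
  1 + log r' - log (rank D_h); since rank D_h \<le> r' + 1, optimality forces r' = 1. So every
  other channel in the support agrees with a on all inputs but one: it has rank 2 and
  m - 1 ones in column a. Column a of W then sums to m - 1 + lam U_a, whereas any
  decomposition l gives column sums at most m - 1 + l U_a; hence lam U_a = P_lam(1) is the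
  minimum, and a is the only column of maximal sum.\<close>

definition fun_channel :: "('m \<Rightarrow> 'n) \<Rightarrow> real^'n^'m" where
  "fun_channel f = (\<chi> i. axis (f i) 1)"

lemma fun_channel_nth [simp]: "fun_channel f $ i $ j = (if f i = j then 1 else 0)"
  by (simp add: fun_channel_def axis_def)

lemma inj_fun_channel: "inj fun_channel"
proof (rule injI)
  fix f g
  assume "fun_channel f = fun_channel g"
  then have one: "fun_channel g $ i $ f i = 1" for i by (metis fun_channel_nth)
  have "g i = f i" for i using one[of i] by (simp split: if_splits)
  then show "f = g" by auto
qed

lemma det_channels_eq_range: "det_channels = range fun_channel"
  unfolding det_channels_def fun_channel_def
proof safe
  fix D :: "real^'n^'m"
  assume "\<forall>i. \<exists>j. D $ i = axis j 1"
  then obtain f where "\<forall>i. D $ i = axis (f i) 1" by metis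
  then have "D = (\<chi> i. axis (f i) 1)" by (simp add: vec_eq_iff)
  then show "D \<in> range (\<lambda>f. \<chi> i. axis (f i) 1)" by blast
qed auto

lemma fun_channel_in_det_channels [simp]: "fun_channel f \<in> det_channels"
  by (simp add: det_channels_eq_range)

lemma det_channelsE:
  assumes "D \<in> det_channels"
  obtains f where "D = fun_channel f"
  using assms by (auto simp: det_channels_eq_range)

lemma finite_det_channels [simp]: "finite det_channels"
  by (simp add: det_channels_eq_range)

lemma Uch_eq_fun_channel: "Uch j = fun_channel (\<lambda>_. j)"
  by (simp add: Uch_def fun_channel_def)

lemma Uch_in_det_channels [simp]: "Uch j \<in> det_channels"
  by (simp add: Uch_eq_fun_channel)

lemma rank_fun_channel: "rank (fun_channel f) = card (range f)"
proof -
  have inj: "inj (\<lambda>j. axis j (1::real))"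
    by (auto intro: injI simp: axis_eq_axis)
  have "rows (fun_channel f) = (\<lambda>j. axis j (1::real)) ` range f"
    by (auto simp: rows_def row_def fun_channel_def)
  moreover have "vec.independent ((\<lambda>j. axis j (1::real)) ` range f)"
    by (rule vec.independent_mono[OF vec.independent_Basis]) (auto simp: cart_basis_def)
  ultimately show ?thesis
    unfolding row_rank_def_gen
    by (simp add: vec.dim_eq_card_independent card_image inj_on_subset[OF inj])
qed

lemma colsum_Uch [simp]: "colsum (Uch j :: real^'n^'m) j = CARD('m)"
  by (simp add: colsum_def Uch_eq_fun_channel)

lemma rank_Uch [simp]: "rank (Uch j) = 1"
  by (simp add: Uch_eq_fun_channel rank_fun_channel)

lemma rank_eq_1_imp_Uch:
  assumes "D \<in> det_channels" "rank D = 1"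
  obtains a where "D = Uch a"
proof -
  obtain f where f: "D = fun_channel f" using assms(1) by (rule det_channelsE)
  then obtain a where "range f = {a}"
    using assms(2) by (auto simp: rank_fun_channel card_1_singleton_iff)
  then have "f = (\<lambda>_. a)" by auto
  then show thesis using that f by (simp add: Uch_eq_fun_channel)
qed

lemma colsum_fun_channel: "colsum (fun_channel f) j = card {i. f i = j}"
  by (simp add: colsum_def sum.inter_filter[symmetric])

lemma LambdaD:
  assumes "l \<in> Lambda W"
  shows "0 \<le> l D" and "D \<notin> det_channels \<Longrightarrow> l D = 0"
    and "(\<Sum>D\<in>det_channels. l D) = 1" and "W = (\<Sum>D\<in>det_channels. l D *\<^sub>R D)"
  using assms by (auto simp: Lambda_def det_dist_def)

lemma Lambda_le_1:
  assumes "l \<in> Lambda W" shows "l D \<le> 1"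
proof (cases "D \<in> det_channels")
  case True
  then have "l D \<le> (\<Sum>D\<in>det_channels. l D)"
    by (intro member_le_sum) (auto simp: LambdaD(1)[OF assms])
  then show ?thesis using LambdaD(3)[OF assms] by simp
qed (simp add: LambdaD(2)[OF assms])

lemma sum_Lambda_affine:
  assumes "l \<in> Lambda W" "U \<in> det_channels"
  shows "(\<Sum>D\<in>det_channels. l D * (c + d * (if D = U then 1 else 0))) = c + d * l U"
proof -
  have "l D * (c + d * (if D = U then 1 else 0)) = c * l D + (if D = U then d * l U else 0)" for D
    by (simp add: algebra_simps)
  then have "(\<Sum>D\<in>det_channels. l D * (c + d * (if D = U then 1 else 0)))
      = c * (\<Sum>D\<in>det_channels. l D) + d * l U"
    using assms(2) by (simp add: sum.distrib sum_distrib_left)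
  then show ?thesis using LambdaD(3)[OF assms(1)] by simp
qed

lemma sum_Lambda_support_cong:
  fixes W :: "real^'n^'m"
  assumes "l \<in> Lambda W"
    and "\<And>D. D \<in> det_channels \<Longrightarrow> 0 < l D \<Longrightarrow> f D = g D"
  shows "(\<Sum>D\<in>det_channels. l D * f D) = (\<Sum>D\<in>det_channels. l D * g D)"
proof (rule sum.cong)
  fix D :: "real^'n^'m" assume "D \<in> det_channels"
  then show "l D * f D = l D * g D"
    using assms(2)[of D] LambdaD(1)[OF assms(1), of D] by (cases "l D = 0") auto
qed simp

lemma Plam_eq_sum:
  "Plam l r = (\<Sum>D\<in>det_channels. l D * (if rank D = r then 1 else 0))"
  unfolding Plam_def by (simp add: sum.inter_filter if_distrib cong: if_cong)

lemma Plam_nonneg: "l \<in> Lambda W \<Longrightarrow> 0 \<le> Plam l r"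
  unfolding Plam_def by (rule sum_nonneg) (simp add: LambdaD(1))

lemma Plam_pos_imp_ex:
  assumes "0 < Plam l r"
  obtains D where "D \<in> det_channels" "rank D = r" "0 < l D"
proof -
  have "\<not> (\<forall>D\<in>{D\<in>det_channels. rank D = r}. l D \<le> 0)"
    using assms sum_nonpos[of "{D\<in>det_channels. rank D = r}" l] unfolding Plam_def by force
  then show thesis using that by auto
qed

lemma Uch_le_Plam_1:
  assumes "l \<in> Lambda W" shows "l (Uch j) \<le> Plam l 1"
  unfolding Plam_def by (rule member_le_sum) (auto simp: LambdaD(1)[OF assms])

lemma Plow_eq_Plam_if_minimal:
  assumes "l \<in> Lambda W" and "\<And>l'. l' \<in> Lambda W \<Longrightarrow> Plam l r \<le> Plam l' r"
  shows "Plow W r = Plam l r"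
  unfolding Plow_def by (rule cInf_eq_minimum) (use assms in auto)

lemma colsum_Lambda:
  assumes "l \<in> Lambda W"
  shows "colsum W j = (\<Sum>D\<in>det_channels. l D * colsum D j)"
proof -
  have "colsum W j = (\<Sum>i\<in>UNIV. \<Sum>D\<in>det_channels. l D * D $ i $ j)"
    unfolding colsum_def by (subst LambdaD(4)[OF assms]) simp
  also have "\<dots> = (\<Sum>D\<in>det_channels. l D * colsum D j)"
    by (subst sum.swap) (simp add: colsum_def sum_distrib_left)
  finally show ?thesis .
qed

lemma colsum_det_channel_le:
  fixes D :: "real^'n^'m"
  assumes "D \<in> det_channels"
  shows "colsum D j \<le> real CARD('m) - 1 + (if D = Uch j then 1 else 0)"
proof -
  obtain f where f: "D = fun_channel f" using assms by (rule det_channelsE)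
  show ?thesis
  proof (cases "f = (\<lambda>_. j)")
    case True
    then show ?thesis by (simp add: f colsum_fun_channel Uch_eq_fun_channel)
  next
    case False
    then obtain i where "f i \<noteq> j" by auto
    then have "{i. f i = j} \<subset> UNIV" by auto
    then have "card {i. f i = j} + 1 \<le> CARD('m)"
      by (metis Suc_eq_plus1 Suc_leI finite psubset_card_mono)
    then have "real (card {i. f i = j}) \<le> real CARD('m) - 1"
      by (metis le_diff_eq of_nat_1 of_nat_add of_nat_le_iff)
    moreover have "fun_channel f \<noteq> Uch j"
      using False inj_fun_channel by (auto simp: Uch_eq_fun_channel dest: injD)
    ultimately show ?thesis by (simp add: f colsum_fun_channel)
  qed
qed

text \<open>Only U_j fills column j completely; every other deterministic channel misses an input.\<close>
lemma colsum_le_Uch: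
  fixes W :: "real^'n^'m"
  assumes "l \<in> Lambda W"
  shows "colsum W j \<le> real CARD('m) - 1 + l (Uch j)"
proof -
  have "colsum W j \<le> (\<Sum>D\<in>det_channels. l D * (real CARD('m) - 1 + 1 * (if D = Uch j then 1 else 0)))"
    unfolding colsum_Lambda[OF assms]
    by (intro sum_mono mult_left_mono LambdaD(1)[OF assms]) (simp add: colsum_det_channel_le)
  also have "\<dots> = real CARD('m) - 1 + l (Uch j)"
    by (simp only: sum_Lambda_affine[OF assms Uch_in_det_channels])
  finally show ?thesis .
qed

lemma C11_le_C11bar:
  fixes W :: "real^'n^'m"
  assumes "l \<in> Lambda W" shows "C11 l \<le> C11bar W"
proof -
  have "C11 l' \<le> (\<Sum>D\<in>(det_channels :: (real^'n^'m) set). \<bar>log 2 (real (rank D))\<bar>)" if "l' \<in> Lambda W" for l'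
    unfolding C11_def
  proof (rule sum_mono)
    fix D :: "real^'n^'m"
    have "l' D * log 2 (real (rank D)) \<le> l' D * \<bar>log 2 (real (rank D))\<bar>"
      by (intro mult_left_mono) (auto simp: LambdaD(1)[OF that])
    also have "\<dots> \<le> \<bar>log 2 (real (rank D))\<bar>"
      using Lambda_le_1[OF that, of D] by (simp add: mult_left_le_one_le LambdaD(1)[OF that])
    finally show "l' D * log 2 (real (rank D)) \<le> \<bar>log 2 (real (rank D))\<bar>" .
  qed
  then have "bdd_above (C11 ` Lambda W)" by (rule bdd_aboveI2)
  then show ?thesis unfolding C11bar_def using assms by (auto intro: cSup_upper)
qed

definition swap_mass :: "('a \<Rightarrow> real) \<Rightarrow> real \<Rightarrow> 'a \<Rightarrow> 'a \<Rightarrow> 'a \<Rightarrow> 'a \<Rightarrow> 'a \<Rightarrow> real" where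
  "swap_mass l e C D A B x =
     l x + e * (indicator {A} x + indicator {B} x - indicator {C} x - indicator {D} x)"

lemma sum_swap_mass:
  fixes \<phi> :: "'a \<Rightarrow> 'b::real_vector"
  assumes "finite S" "A \<in> S" "B \<in> S" "C \<in> S" "D \<in> S"
  shows "(\<Sum>x\<in>S. swap_mass l e C D A B x *\<^sub>R \<phi> x)
       = (\<Sum>x\<in>S. l x *\<^sub>R \<phi> x) + e *\<^sub>R (\<phi> A + \<phi> B - \<phi> C - \<phi> D)"
proof -
  have "(\<Sum>x\<in>S. (e * indicator {X} x) *\<^sub>R \<phi> x) = e *\<^sub>R \<phi> X" if "X \<in> S" for X
  proof -
    have "(\<Sum>x\<in>S. (e * indicator {X} x) *\<^sub>R \<phi> x) = (\<Sum>x\<in>S. if x = X then e *\<^sub>R \<phi> X else 0)"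
      by (rule sum.cong) auto
    then show ?thesis using that assms(1) by simp
  qed
  then show ?thesis
    using assms by (simp add: swap_mass_def algebra_simps sum.distrib sum_subtractf)
qed

lemma swap_mass_in_Lambda:
  assumes l: "l \<in> Lambda W"
    and mem: "A \<in> det_channels" "B \<in> det_channels" "C \<in> det_channels" "D \<in> det_channels"
    and "A + B = C + D" "C \<noteq> D" "0 \<le> e" "e \<le> l C" "e \<le> l D"
  shows "swap_mass l e C D A B \<in> Lambda W"
proof -
  note sums = sum_swap_mass[OF finite_det_channels mem, of l e]
  have "0 \<le> swap_mass l e C D A B x" for x
    using assms LambdaD(1)[OF l, of x] by (auto simp: swap_mass_def indicator_def)
  moreover have "swap_mass l e C D A B x = 0" if "x \<notin> det_channels" for x
    using that mem LambdaD(2)[OF l that] by (auto simp: swap_mass_def indicator_def)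
  moreover have "(\<Sum>x\<in>det_channels. swap_mass l e C D A B x) = 1"
    using sums[of "\<lambda>_. 1::real"] LambdaD(3)[OF l] by simp
  moreover have "W = (\<Sum>x\<in>det_channels. swap_mass l e C D A B x *\<^sub>R x)"
    using sums[of "\<lambda>x. x"] LambdaD(4)[OF l] \<open>A + B = C + D\<close> by simp
  ultimately show ?thesis by (simp add: Lambda_def det_dist_def)
qed

lemma C11_swap_mass:
  assumes "A \<in> det_channels" "B \<in> det_channels" "C \<in> det_channels" "D \<in> det_channels"
  shows "C11 (swap_mass l e C D A B) = C11 l + e * (log 2 (rank A) + log 2 (rank B)
    - log 2 (rank C) - log 2 (rank D))"
  using sum_swap_mass[OF finite_det_channels assms, of l e "\<lambda>x. log 2 (rank x)"]
  by (simp add: C11_def)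

lemma log2_Suc_less:
  assumes "2 \<le> r" shows "log 2 (real (r + 1)) < 1 + log 2 (real r)"
proof -
  have "log 2 (real (r + 1)) < log 2 (2 * real r)"
    using assms by simp
  also have "\<dots> = 1 + log 2 (real r)"
    using assms by (simp add: log_mult)
  finally show ?thesis .
qed

lemma card_range_le_fun_upd:
  fixes h :: "'a::finite \<Rightarrow> 'b"
  shows "card (range h) \<le> card (range (h(i := a))) + 1"
proof -
  have "range h \<subseteq> insert (h i) (range (h(i := a)))" by auto
  then have "card (range h) \<le> card (insert (h i) (range (h(i := a))))"
    by (rule card_mono[rotated]) simp
  also have "\<dots> \<le> card (range (h(i := a))) + 1" by (simp add: card_insert_if)
  finally show ?thesis .
qed

locale C11_optimal =
  fixes W :: "real^'n^'m" and lam :: "real^'n^'m \<Rightarrow> real"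
  assumes two_inputs: "2 \<le> CARD('m)"
    and lam: "lam \<in> Lambda W"
    and optimal: "\<And>l. l \<in> Lambda W \<Longrightarrow> C11 l \<le> C11 lam"
begin

lemma ex_other_input: obtains k :: 'm where "k \<noteq> i"
proof -
  have "\<not> UNIV \<subseteq> {i}"
  proof
    assume "UNIV \<subseteq> {i}"
    then have "CARD('m) \<le> card {i}" by (rule card_mono[rotated]) simp
    then show False using two_inputs by simp
  qed
  then show thesis using that by blast
qed

text \<open>Since E + E' = U + D, shifting mass from U, D onto E, E' keeps the decomposition of W;
  optimality then forces 1 + log (rank E') \<le> log (rank D) \<le> log (rank E' + 1).\<close>
lemma exchange:
  assumes pos: "0 < lam (Uch a)" "0 < lam (fun_channel h)" and hi: "h i \<noteq> a"
  shows "h(i := a) = (\<lambda>_. a)"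
proof -
  define U where "U = fun_channel (\<lambda>_::'m. a)"
  define D where "D = fun_channel h"
  define E where "E = fun_channel ((\<lambda>_::'m. a)(i := h i))"
  define E' where "E' = fun_channel (h(i := a))"
  define e where "e = min (lam U) (lam D)"
  have mem: "E \<in> det_channels" "E' \<in> det_channels" "U \<in> det_channels" "D \<in> det_channels"
    by (simp_all add: E_def E'_def U_def D_def)
  have "(\<lambda>_. a) \<noteq> h" using hi by auto
  then have "U \<noteq> D" using inj_fun_channel unfolding U_def D_def by (metis injD)
  moreover have "E + E' = U + D"
    by (simp add: E_def E'_def U_def D_def vec_eq_iff)
  moreover have e: "0 < e" "e \<le> lam U" "e \<le> lam D"
    using pos by (simp_all add: e_def U_def D_def Uch_eq_fun_channel)
  ultimately have "swap_mass lam e U D E E' \<in> Lambda W"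
    using swap_mass_in_Lambda[OF lam mem] by simp
  then have "e * (log 2 (rank E) + log 2 (rank E') - log 2 (rank U) - log 2 (rank D)) \<le> 0"
    using optimal C11_swap_mass[OF mem, of lam e] by fastforce
  then have gain: "log 2 (rank E) + log 2 (rank E') \<le> log 2 (rank U) + log 2 (rank D)"
    using \<open>0 < e\<close> by (simp add: mult_le_0_iff)
  obtain k where "k \<noteq> i" by (rule ex_other_input)
  then have "range ((\<lambda>_::'m. a)(i := h i)) = {a, h i}" by (auto simp: image_def)
  then have "rank E = 2" using hi by (simp add: E_def rank_fun_channel)
  moreover have "rank U = 1" by (simp add: U_def rank_fun_channel)
  ultimately have less: "1 + log 2 (card (range (h(i := a)))) \<le> log 2 (card (range h))"
    using gain by (simp add: E'_def D_def rank_fun_channel)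
  have "card (range (h(i := a))) = 1"
  proof (rule ccontr)
    assume "card (range (h(i := a))) \<noteq> 1"
    moreover have "0 < card (range (h(i := a)))" by (simp add: card_gt_0_iff)
    ultimately have "2 \<le> card (range (h(i := a)))" by linarith
    moreover have "log 2 (card (range h)) \<le> log 2 (card (range (h(i := a))) + 1)"
      using card_range_le_fun_upd[of h i a] by (simp add: card_gt_0_iff)
    ultimately show False using less log2_Suc_less by fastforce
  qed
  moreover have "a \<in> range (h(i := a))" by simp
  ultimately have "range (h(i := a)) = {a}" by (metis card_1_singletonE singletonD)
  then show ?thesis by (intro ext) (metis rangeI singletonD)
qed

lemma support_near_Uch:
  assumes a: "0 < lam (Uch a)" and D: "D \<in> det_channels" "0 < lam D" "D \<noteq> Uch a"
  shows "rank D = 2" and "colsum D a = real CARD('m) - 1"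
proof -
  obtain h where h: "D = fun_channel h" using D(1) by (rule det_channelsE)
  have "h \<noteq> (\<lambda>_. a)" using D(3) h by (auto simp: Uch_eq_fun_channel)
  then obtain i where hi: "h i \<noteq> a" by auto
  have "h(i := a) = (\<lambda>_. a)" using exchange[OF a] D(2) hi h by blast
  then have near: "h k = a" if "k \<noteq> i" for k using that by (metis fun_upd_other)
  obtain k where "k \<noteq> i" by (rule ex_other_input)
  then have "range h = {a, h i}" using near by (auto simp: image_def) (metis near)
  then show "rank D = 2" using hi by (simp add: h rank_fun_channel)
  have "{k. h k = a} = UNIV - {i}" using near hi by auto
  then show "colsum D a = real CARD('m) - 1"
    by (simp add: h colsum_fun_channel card_Diff_singleton of_nat_diff Suc_leI)
qed

lemma rank_on_support:
  assumes "0 < lam (Uch a)" "D \<in> det_channels" "0 < lam D"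
  shows "rank D = (if D = Uch a then 1 else 2)"
  using support_near_Uch(1)[OF assms] by auto

lemma Uch_unique:
  assumes "0 < lam (Uch a)" "0 < lam (Uch b)" shows "b = a"
proof -
  have "(Uch b :: real^'n^'m) = Uch a" using rank_on_support[OF assms(1) _ assms(2)] by (auto split: if_splits)
  then have "(\<lambda>_::'m. b) = (\<lambda>_. a)" using inj_fun_channel by (metis Uch_eq_fun_channel injD)
  then show ?thesis by meson
qed

lemma colsum_max_column:
  assumes "0 < lam (Uch a)" shows "colsum W a = real CARD('m) - 1 + lam (Uch a)"
proof -
  have "colsum W a = (\<Sum>D\<in>det_channels. lam D * (real CARD('m) - 1 + 1 * (if D = Uch a then 1 else 0)))"
    unfolding colsum_Lambda[OF lam]
    by (rule sum_Lambda_support_cong[OF lam]) (auto simp: support_near_Uch(2)[OF assms])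
  then show ?thesis by (simp only: sum_Lambda_affine[OF lam Uch_in_det_channels])
qed

lemma Plam_on_support:
  assumes "0 < lam (Uch a)"
  shows "Plam lam 1 = lam (Uch a)" and "Plam lam 2 = 1 - lam (Uch a)"
proof -
  have "Plam lam 1 = (\<Sum>D\<in>det_channels. lam D * (0 + 1 * (if D = Uch a then 1 else 0)))"
    unfolding Plam_eq_sum by (rule sum_Lambda_support_cong[OF lam]) (simp add: rank_on_support[OF assms])
  then show "Plam lam 1 = lam (Uch a)" by (simp only: sum_Lambda_affine[OF lam Uch_in_det_channels])
  have "Plam lam 2 = (\<Sum>D\<in>det_channels. lam D * (1 + (- 1) * (if D = Uch a then 1 else 0)))"
    unfolding Plam_eq_sum by (rule sum_Lambda_support_cong[OF lam]) (simp add: rank_on_support[OF assms])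
  then show "Plam lam 2 = 1 - lam (Uch a)" by (simp only: sum_Lambda_affine[OF lam Uch_in_det_channels])
qed

lemma Plam_1_minimal:
  assumes "0 < lam (Uch a)" "l \<in> Lambda W" shows "Plam lam 1 \<le> Plam l 1"
  using colsum_le_Uch[OF assms(2), of a] colsum_max_column[OF assms(1)]
    Uch_le_Plam_1[OF assms(2), of a] Plam_on_support(1)[OF assms(1)] by linarith

end

theorem proposition8:
  fixes W :: "real^'n^'m" and lam :: "real^'n^'m \<Rightarrow> real"
  assumes "CARD('m) \<ge> 2" and "CARD('n) \<ge> 2"
    and "channel W"
    and "lam \<in> Lambda W"
    and "C11 lam = C11bar W"
  shows "Plam lam 1 = Plow W 1 \<and>
    (Plow W 1 > 0 \<longrightarrow>
      (\<forall>l. (\<forall>j. colsum W j \<le> colsum W l) \<longrightarrow>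
         lam (Uch l) = Plow W 1 \<and> Plam lam 2 = 1 - Plow W 1))"
proof -
  interpret C11_optimal W lam
    using assms(1,4,5) C11_le_C11bar by unfold_locales auto
  show ?thesis
  proof (cases "Plam lam 1 = 0")
    case True
    then have "Plow W 1 = Plam lam 1"
      using Plow_eq_Plam_if_minimal[OF lam] Plam_nonneg by metis
    then show ?thesis using True by simp
  next
    case False
    then obtain D where "D \<in> det_channels" "rank D = 1" "0 < lam D"
      using Plam_nonneg[OF lam] Plam_pos_imp_ex by (metis less_eq_real_def)
    then obtain a where a: "0 < lam (Uch a)" by (metis rank_eq_1_imp_Uch)
    have Plow: "Plow W 1 = lam (Uch a)"
      using Plow_eq_Plam_if_minimal[OF lam Plam_1_minimal[OF a]] Plam_on_support(1)[OF a] by simp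
    have "l = a" if "\<forall>j. colsum W j \<le> colsum W l" for l
    proof (rule Uch_unique[OF a])
      show "0 < lam (Uch l)"
        using that[rule_format, of a] colsum_max_column[OF a] colsum_le_Uch[OF lam, of l] a by linarith
    qed
    then show ?thesis using Plow Plam_on_support[OF a] by auto
  qed
qed

end
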